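(* Let $X$ be a Tychonoff space and $A\subseteq X$ a clopen subset. Then (a) $\operatorname{Homeo}_{cpt}(A)$ naturally embeds (by extending homeomorphisms by the identity on $X\setminus A$) as a closed topological subgroup of $\operatorname{Homeo}_{cpt}(X)$; and (b) if $X$ has CSHP, then so does $A$.
   Context: For a Tychonoff space $Y$, $\operatorname{Homeo}_{cpt}(Y)$ is the group of homeomorphisms of $Y$ with compact support $\operatorname{cl}_Y\{y\mid h(y)\neq y\}$; each extends to a homeomorphism of $\beta Y$ that is the identity on $\beta Y\setminus Y$, and $\operatorname{Homeo}_{cpt}(Y)$ is given the compact-open topology induced from $\beta Y$. For compact $K\subseteq Y$, $\operatorname{Homeo}_K(Y)$ is the subgroup of homeomorphisms fixing every point outside $K$. $Y$ has CSHP (Compactly Supported Homeomorphism Property) if the colimit space topology on $\bigcup_{K\in\mathscr K(Y)}\operatorname{Homeo}_K(Y)=\operatorname{Homeo}_{cpt}(Y)$, namely $\{U\mid U\cap\operatorname{Homeo}_K(Y)\text{ open in }\operatorname{Homeo}_K(Y)\ \forall K\}$ ($\mathscr K(Y)$ the compact subsets of $Y$), coincides with the topology of $\operatorname{Homeo}_{cpt}(Y)$. *)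

theory Defs
  imports "HOL-Analysis.Analysis"
begin

definition Tychonoff_sp :: "'a topology \<Rightarrow> bool" where
  "Tychonoff_sp Y \<longleftrightarrow> completely_regular_space Y \<and> Hausdorff_space Y"

text \<open>Stone-Cech compactification: closure of the evaluation embedding of Y
  into the cube [0,1]^C(Y,[0,1]).\<close>
definition SC_index :: "'a topology \<Rightarrow> ('a \<Rightarrow> real) set" where
  "SC_index Y = {f. continuous_map Y (top_of_set {0..1}) f}"

definition SC_cube :: "'a topology \<Rightarrow> (('a \<Rightarrow> real) \<Rightarrow> real) topology" where
  "SC_cube Y = product_topology (\<lambda>f. top_of_set {0..1::real}) (SC_index Y)"

definition SC_embed :: "'a topology \<Rightarrow> 'a \<Rightarrow> (('a \<Rightarrow> real) \<Rightarrow> real)" where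
  "SC_embed Y y = (\<lambda>f\<in>SC_index Y. f y)"

definition beta :: "'a topology \<Rightarrow> (('a \<Rightarrow> real) \<Rightarrow> real) topology" where
  "beta Y = subtopology (SC_cube Y) ((SC_cube Y) closure_of (SC_embed Y ` topspace Y))"

text \<open>The extension of a map h : Y -> Y to beta Y (on the cube: p |-> (f |-> p (f o h))).\<close>
definition SC_ext :: "'a topology \<Rightarrow> ('a \<Rightarrow> 'a) \<Rightarrow> (('a \<Rightarrow> real) \<Rightarrow> real) \<Rightarrow> (('a \<Rightarrow> real) \<Rightarrow> real)" where
  "SC_ext Y h = (\<lambda>p. \<lambda>f\<in>SC_index Y. p (f \<circ> h))"

definition Homeo_cpt :: "'a topology \<Rightarrow> ('a \<Rightarrow> 'a) set" where
  "Homeo_cpt Y = {h. homeomorphic_map Y Y h \<and> (\<forall>x. x \<notin> topspace Y \<longrightarrow> h x = x)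
      \<and> compactin Y (Y closure_of {y \<in> topspace Y. h y \<noteq> y})}"

text \<open>Topology on Homeo_cpt(Y): compact-open topology of the extensions to beta Y.\<close>
definition Homeo_cpt_top :: "'a topology \<Rightarrow> ('a \<Rightarrow> 'a) topology" where
  "Homeo_cpt_top Y = topology_generated_by
     {{h \<in> Homeo_cpt Y. SC_ext Y h ` K \<subseteq> U} | K U. compactin (beta Y) K \<and> openin (beta Y) U}"

definition Homeo_K :: "'a topology \<Rightarrow> 'a set \<Rightarrow> ('a \<Rightarrow> 'a) set" where
  "Homeo_K Y K = {h \<in> Homeo_cpt Y. \<forall>y \<in> topspace Y - K. h y = y}"

definition CSHP :: "'a topology \<Rightarrow> bool" where
  "CSHP Y \<longleftrightarrow> (\<forall>U. U \<subseteq> Homeo_cpt Y \<longrightarrow>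
     (openin (Homeo_cpt_top Y) U \<longleftrightarrow>
      (\<forall>K. compactin Y K \<longrightarrow>
           openin (subtopology (Homeo_cpt_top Y) (Homeo_K Y K)) (U \<inter> Homeo_K Y K))))"

definition ext_id :: "'a set \<Rightarrow> ('a \<Rightarrow> 'a) \<Rightarrow> 'a \<Rightarrow> 'a" where
  "ext_id A h = (\<lambda>x. if x \<in> A then h x else x)"

end

theory Submission
  imports Defs
begin

text \<open>
  By the pasting lemma, extending by the identity identifies \<open>Homeo\<^sub>c\<^sub>p\<^sub>t(A)\<close> with the
  subgroup of \<open>Homeo\<^sub>c\<^sub>p\<^sub>t(X)\<close> fixing \<open>X - A\<close> pointwise. This subgroup is closed: for \<open>x \<in> X\<close>,
  \<open>h x \<noteq> x\<close> says that \<open>\<beta>h\<close> maps the compact set \<open>{x}\<close> into the open set \<open>\<beta>X - {x}\<close>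
  (points of a Tychonoff space stay distinct in \<open>\<beta>X\<close>).
  The compact-open topologies of \<open>\<beta>A\<close> and \<open>\<beta>X\<close> agree on it because the extension of the
  inclusion \<open>A \<hookrightarrow> X\<close> embeds \<open>\<beta>A\<close> onto the closure of \<open>A\<close> in \<open>\<beta>X\<close> (injectively, as
  functions on \<open>A\<close> extend by zero), and a homeomorphism supported in \<open>A\<close> acts on \<open>\<beta>X\<close> through
  this copy of \<open>\<beta>A\<close> while fixing the closure of \<open>X - A\<close>.
  For CSHP, if \<open>V \<subseteq> Homeo\<^sub>c\<^sub>p\<^sub>t(A)\<close> is open in every \<open>Homeo\<^sub>K(A)\<close>, then the union of \<open>V\<close> with
  the open complement of \<open>Homeo\<^sub>c\<^sub>p\<^sub>t(A)\<close> is open in every \<open>Homeo\<^sub>K(X)\<close>, hence open, and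
  its trace on \<open>Homeo\<^sub>c\<^sub>p\<^sub>t(A)\<close> is \<open>V\<close>.
\<close>

section \<open>General topology\<close>

lemma continuous_map_if_clopen:
  assumes "closedin X A" "openin X A"
    and f: "continuous_map (subtopology X A) Z f"
    and g: "continuous_map (subtopology X (topspace X - A)) Z g"
  shows "continuous_map X Z (\<lambda>x. if x \<in> A then f x else g x)"
proof (rule continuous_map_cases)
  have "X closure_of {x. x \<notin> A} = X closure_of (topspace X - A)"
    by (metis Diff_eq closure_of_restrict Compl_eq)
  then have "X closure_of {x. x \<notin> A} = topspace X - A"
    using assms(2) by (simp add: closure_of_closedin closedin_diff)
  then show "continuous_map (subtopology X (X closure_of {x. x \<notin> A})) Z g" using g by simp
  show "continuous_map (subtopology X (X closure_of {x. x \<in> A})) Z f"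
    using assms(1) f by (simp add: closure_of_closedin)
  have "X frontier_of {x. x \<in> A} = {}"
    using assms by (simp add: frontier_of_def closure_of_closedin interior_of_openin)
  then show "\<And>x. x \<in> X frontier_of {x. x \<in> A} \<Longrightarrow> f x = g x" by simp
qed

lemma homeomorphic_map_ext_id:
  assumes "closedin X A" "openin X A" and h: "homeomorphic_map (subtopology X A) (subtopology X A) h"
  shows "homeomorphic_map X X (ext_id A h)"
proof -
  obtain g where g: "homeomorphic_maps (subtopology X A) (subtopology X A) h g"
    using h homeomorphic_map_maps by blast
  have A: "topspace (subtopology X A) = A"
    using closedin_subset[OF assms(1)] by (simp add: inf.absorb2)
  have hc: "continuous_map (subtopology X A) (subtopology X A) h"
    and gc: "continuous_map (subtopology X A) (subtopology X A) g"
    and inv: "\<And>x. x \<in> A \<Longrightarrow> g (h x) = x" "\<And>x. x \<in> A \<Longrightarrow> h (g x) = x"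
    using g A unfolding homeomorphic_maps_def by auto
  have into: "\<And>x. x \<in> A \<Longrightarrow> h x \<in> A" "\<And>x. x \<in> A \<Longrightarrow> g x \<in> A"
    using continuous_map_image_subset_topspace[OF hc] continuous_map_image_subset_topspace[OF gc] A
    by auto
  have idc: "continuous_map (subtopology X (topspace X - A)) X (\<lambda>x. x)"
    using continuous_map_id_subt unfolding id_def .
  have "continuous_map X X (ext_id A f)"
    if "continuous_map (subtopology X A) (subtopology X A) f" for f
    unfolding ext_id_def
    by (rule continuous_map_if_clopen[OF assms(1,2) continuous_map_into_fulltopology[OF that] idc])
  then have "continuous_map X X (ext_id A h)" "continuous_map X X (ext_id A g)"
    using hc gc by blast+
  moreover have "ext_id A g (ext_id A h x) = x" "ext_id A h (ext_id A g x) = x" for x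
    unfolding ext_id_def using into inv by auto
  ultimately have "homeomorphic_maps X X (ext_id A h) (ext_id A g)"
    unfolding homeomorphic_maps_def by blast
  then show ?thesis using homeomorphic_map_maps by blast
qed

lemma homeomorphic_map_subtopology_fixing:
  assumes h: "homeomorphic_map X X h" and fixed: "\<And>x. x \<in> topspace X - A \<Longrightarrow> h x = x"
  shows "homeomorphic_map (subtopology X A) (subtopology X A) h"
proof (rule homeomorphic_map_subtopologies_alt[OF h])
  fix x assume x: "x \<in> topspace X" and hx: "h x \<in> topspace X"
  have "h x = x" if "x \<in> A" "h x \<notin> A"
  proof -
    have "h (h x) = h x" using fixed hx that(2) by blast
    then show ?thesis
      using homeomorphic_imp_injective_map[OF h] x hx by (auto dest: inj_onD)
  qed
  then show "h x \<in> A \<longleftrightarrow> x \<in> A" using fixed x by fastforce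
qed

lemma closure_of_subtopology_closedin:
  "\<lbrakk>closedin X A; S \<subseteq> A\<rbrakk> \<Longrightarrow> subtopology X A closure_of S = X closure_of S"
  by (simp add: closure_of_subtopology closure_of_minimal inf.absorb2 Int_absorb1)

lemma subtopology_topology_generated_by_eq:
  assumes "T \<subseteq> \<Union>\<S>" and "\<Union>\<T> = T"
    and "\<And>U. U \<in> \<S> \<Longrightarrow> openin (topology_generated_by \<T>) (U \<inter> T)"
    and "\<And>V. V \<in> \<T> \<Longrightarrow> openin (subtopology (topology_generated_by \<S>) T) V"
  shows "subtopology (topology_generated_by \<S>) T = topology_generated_by \<T>"
proof -
  have "continuous_map (topology_generated_by \<T>) (subtopology (topology_generated_by \<S>) T) id"
    unfolding continuous_map_in_subtopology
    using assms(1-3) by (auto intro!: continuous_on_generated_topo)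
  moreover have "continuous_map (subtopology (topology_generated_by \<S>) T) (topology_generated_by \<T>) id"
    using assms(1,2,4) openin_subset[OF assms(4)]
    by (intro continuous_on_generated_topo) (auto simp: Int_absorb2)
  ultimately have "homeomorphic_map (topology_generated_by \<T>) (subtopology (topology_generated_by \<S>) T) id"
    unfolding homeomorphic_map_maps homeomorphic_maps_def by auto
  then show ?thesis by simp
qed

lemma openin_subtopology_Un_complement:
  assumes C: "closedin T C" and "V \<subseteq> C" and "B \<subseteq> topspace T"
    and V: "openin (subtopology T (C \<inter> B)) (V \<inter> B)"
  shows "openin (subtopology T B) ((V \<union> (topspace T - C)) \<inter> B)"
proof -
  obtain U where U: "openin T U" and VO: "V \<inter> B = U \<inter> (C \<inter> B)"
    using V unfolding openin_subtopology by blast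
  have "(V \<union> (topspace T - C)) \<inter> B = (U \<union> (topspace T - C)) \<inter> B"
    using VO assms(2,3) by blast
  moreover have "openin T (U \<union> (topspace T - C))" using U C by blast
  ultimately show ?thesis by (simp add: openin_subtopology_Int)
qed

section \<open>The Stone-Cech compactification\<close>

lemma Hausdorff_space_SC_cube: "Hausdorff_space (SC_cube Y)"
  unfolding SC_cube_def
  by (simp add: Hausdorff_space_product_topology Hausdorff_space_subtopology)

lemma compact_space_SC_cube: "compact_space (SC_cube Y)"
  unfolding SC_cube_def
  by (simp add: compact_space_product_topology compact_space_subtopology)

lemma topspace_beta: "topspace (beta Y) = SC_cube Y closure_of (SC_embed Y ` topspace Y)"
  unfolding beta_def by (simp add: inf.absorb2 closure_of_subset_topspace)

lemma Hausdorff_space_beta: "Hausdorff_space (beta Y)"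
  unfolding beta_def by (simp add: Hausdorff_space_SC_cube Hausdorff_space_subtopology)

lemma compact_space_beta: "compact_space (beta Y)"
  unfolding beta_def
  by (simp add: compact_space_SC_cube closedin_compact_space compact_space_subtopology)

lemma comp_in_SC_index:
  "\<lbrakk>continuous_map Y Y h; f \<in> SC_index Y\<rbrakk> \<Longrightarrow> f \<circ> h \<in> SC_index Y"
  unfolding SC_index_def by (auto intro: continuous_map_compose)

lemma SC_embed_in_SC_cube: "y \<in> topspace Y \<Longrightarrow> SC_embed Y y \<in> topspace (SC_cube Y)"
  unfolding SC_embed_def SC_cube_def SC_index_def
  by (auto simp: continuous_map_def Pi_iff)

lemma SC_embed_in_beta: "y \<in> topspace Y \<Longrightarrow> SC_embed Y y \<in> topspace (beta Y)"
  unfolding topspace_beta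
  using closure_of_subset_Int[of "SC_cube Y" "SC_embed Y ` topspace Y"] SC_embed_in_SC_cube[of y Y]
  by blast

lemma inj_on_SC_embed:
  assumes "completely_regular_space Y" and "t1_space Y"
  shows "inj_on (SC_embed Y) (topspace Y)"
proof (rule inj_onI, rule ccontr)
  fix x y assume x: "x \<in> topspace Y" and y: "y \<in> topspace Y"
    and eq: "SC_embed Y x = SC_embed Y y" and "x \<noteq> y"
  have "closedin Y {y}" using closedin_t1_singleton[OF assms(2) y] .
  then obtain f :: "'a \<Rightarrow> real"
    where f: "continuous_map Y (top_of_set {0..1}) f" "f x = 0" "f ` {y} \<subseteq> {1}"
    using assms(1) x \<open>x \<noteq> y\<close> unfolding completely_regular_space_def by blast
  then have "f \<in> SC_index Y" unfolding SC_index_def by blast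
  then have "f x = f y" using fun_cong[OF eq, of f] unfolding SC_embed_def by simp
  then show False using f by simp
qed

lemma continuous_map_SC_ext:
  assumes "continuous_map Y Y h"
  shows "continuous_map (SC_cube Y) (SC_cube Y) (SC_ext Y h)"
  unfolding SC_cube_def continuous_map_componentwise
proof (intro conjI ballI)
  show "SC_ext Y h ` topspace (product_topology (\<lambda>f. top_of_set {0..1}) (SC_index Y))
      \<subseteq> extensional (SC_index Y)"
    by (auto simp: SC_ext_def)
  fix f assume f: "f \<in> SC_index Y"
  have "continuous_map (product_topology (\<lambda>f. top_of_set {0..1::real}) (SC_index Y))
      (top_of_set {0..1}) (\<lambda>p. p (f \<circ> h))"
    using continuous_map_product_projection[OF comp_in_SC_index[OF assms f],
        where X="\<lambda>f. top_of_set {0..1::real}"] by simp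
  then show "continuous_map (product_topology (\<lambda>f. top_of_set {0..1::real}) (SC_index Y))
      (top_of_set {0..1}) (\<lambda>p. SC_ext Y h p f)"
    by (rule continuous_map_eq) (simp add: SC_ext_def f)
qed

lemma SC_ext_SC_embed:
  "\<lbrakk>continuous_map Y Y h; y \<in> topspace Y\<rbrakk> \<Longrightarrow> SC_ext Y h (SC_embed Y y) = SC_embed Y (h y)"
  unfolding SC_ext_def SC_embed_def by (rule ext) (simp add: comp_in_SC_index)

lemma SC_ext_image_beta:
  assumes "continuous_map Y Y h"
  shows "SC_ext Y h ` topspace (beta Y) \<subseteq> topspace (beta Y)"
proof -
  have "SC_ext Y h ` topspace (beta Y)
      \<subseteq> SC_cube Y closure_of (SC_ext Y h ` SC_embed Y ` topspace Y)"
    unfolding topspace_beta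
    by (rule continuous_map_image_closure_subset[OF continuous_map_SC_ext[OF assms]])
  also have "\<dots> \<subseteq> SC_cube Y closure_of (SC_embed Y ` topspace Y)"
    using SC_ext_SC_embed[OF assms] continuous_map_image_subset_topspace[OF assms]
    by (intro closure_of_mono) auto
  finally show ?thesis unfolding topspace_beta .
qed

lemma SC_ext_fixes_closure_of:
  assumes h: "continuous_map Y Y h" and fixed: "\<And>x. x \<in> S \<Longrightarrow> h x = x"
    and "S \<subseteq> topspace Y" and p: "p \<in> SC_cube Y closure_of (SC_embed Y ` S)"
  shows "SC_ext Y h p = p"
proof -
  let ?F = "{p \<in> topspace (SC_cube Y). SC_ext Y h p = id p}"
  have "closedin (SC_cube Y) ?F"
    by (rule closedin_continuous_maps_eq[OF Hausdorff_space_SC_cube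
          continuous_map_SC_ext[OF h] continuous_map_id])
  moreover have "SC_embed Y ` S \<subseteq> ?F"
  proof (rule image_subsetI)
    fix x assume "x \<in> S"
    then have "x \<in> topspace Y" using assms(3) by blast
    then show "SC_embed Y x \<in> ?F"
      using SC_embed_in_SC_cube[of x Y] SC_ext_SC_embed[OF h, of x] fixed[OF \<open>x \<in> S\<close>] by simp
  qed
  ultimately have "SC_cube Y closure_of (SC_embed Y ` S) \<subseteq> ?F"
    by (rule closure_of_minimal[rotated])
  then show ?thesis using p by auto
qed

text \<open>On \<open>\<beta>\<close> of a subspace \<open>S\<close> of \<open>X\<close>, restricting to the coordinates indexed by
  \<open>SC_index X\<close> is the Stone-Cech extension of the inclusion \<open>S \<hookrightarrow> X\<close>.\<close>

definition SC_restrict :: "'a topology \<Rightarrow> (('a \<Rightarrow> real) \<Rightarrow> real) \<Rightarrow> (('a \<Rightarrow> real) \<Rightarrow> real)" where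
  "SC_restrict X q = restrict q (SC_index X)"

lemma SC_index_subset_subtopology: "SC_index X \<subseteq> SC_index (subtopology X S)"
  unfolding SC_index_def by (auto intro: continuous_map_from_subtopology)

lemma continuous_map_SC_restrict:
  "continuous_map (SC_cube (subtopology X S)) (SC_cube X) (SC_restrict X)"
  unfolding SC_cube_def continuous_map_componentwise
proof (intro conjI ballI)
  show "SC_restrict X ` topspace (product_topology (\<lambda>f. top_of_set {0..1}) (SC_index (subtopology X S)))
      \<subseteq> extensional (SC_index X)"
    by (auto simp: SC_restrict_def)
  fix f assume f: "f \<in> SC_index X"
  then have "f \<in> SC_index (subtopology X S)" using SC_index_subset_subtopology by blast
  then have "continuous_map (product_topology (\<lambda>f. top_of_set {0..1::real}) (SC_index (subtopology X S)))
      (top_of_set {0..1}) (\<lambda>q. q f)"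
    using continuous_map_product_projection[where X="\<lambda>f. top_of_set {0..1::real}"] by fastforce
  then show "continuous_map (product_topology (\<lambda>f. top_of_set {0..1::real}) (SC_index (subtopology X S)))
      (top_of_set {0..1}) (\<lambda>q. SC_restrict X q f)"
    by (rule continuous_map_eq) (simp add: SC_restrict_def f)
qed

lemma SC_restrict_SC_embed: "SC_restrict X (SC_embed (subtopology X S) y) = SC_embed X y"
  unfolding SC_restrict_def SC_embed_def
  using SC_index_subset_subtopology by (auto simp: fun_eq_iff)

lemma SC_restrict_image_beta_subset:
  "SC_restrict X ` topspace (beta (subtopology X S))
     \<subseteq> SC_cube X closure_of (SC_embed X ` (topspace X \<inter> S))"
proof -
  have "SC_restrict X ` topspace (beta (subtopology X S))
      \<subseteq> SC_cube X closure_of (SC_restrict X ` SC_embed (subtopology X S) ` topspace (subtopology X S))"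
    unfolding topspace_beta by (rule continuous_map_image_closure_subset[OF continuous_map_SC_restrict])
  then show ?thesis by (simp add: image_image SC_restrict_SC_embed)
qed

lemma SC_restrict_image_beta:
  "SC_restrict X ` topspace (beta (subtopology X S))
     = SC_cube X closure_of (SC_embed X ` (topspace X \<inter> S))"
proof
  let ?B = "SC_restrict X ` topspace (beta (subtopology X S))"
  have "compactin (SC_cube (subtopology X S)) (topspace (beta (subtopology X S)))"
    unfolding topspace_beta by (rule closedin_compact_space[OF compact_space_SC_cube closedin_closure_of])
  then have "compactin (SC_cube X) ?B"
    by (rule image_compactin[OF _ continuous_map_SC_restrict])
  then have "closedin (SC_cube X) ?B"
    by (rule compactin_imp_closedin[OF Hausdorff_space_SC_cube])
  moreover have "SC_embed X ` (topspace X \<inter> S) \<subseteq> ?B"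
  proof (rule image_subsetI)
    fix y assume "y \<in> topspace X \<inter> S"
    then have "SC_embed (subtopology X S) y \<in> topspace (beta (subtopology X S))"
      by (intro SC_embed_in_beta) simp
    then show "SC_embed X y \<in> ?B" unfolding SC_restrict_SC_embed[of X S y, symmetric] by blast
  qed
  ultimately show "SC_cube X closure_of (SC_embed X ` (topspace X \<inter> S)) \<subseteq> ?B"
    by (rule closure_of_minimal[rotated])
qed (rule SC_restrict_image_beta_subset)

lemma continuous_map_SC_restrict_beta:
  "continuous_map (beta (subtopology X S)) (beta X) (SC_restrict X)"
proof -
  have "SC_cube X closure_of (SC_embed X ` (topspace X \<inter> S)) \<subseteq> topspace (beta X)"
    unfolding topspace_beta by (intro closure_of_mono image_mono) blast
  then have "SC_restrict X \<in> topspace (beta (subtopology X S))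
      \<rightarrow> SC_cube X closure_of (SC_embed X ` topspace X)"
    using SC_restrict_image_beta_subset[of X S] topspace_beta[of X] by blast
  moreover have "continuous_map (beta (subtopology X S)) (SC_cube X) (SC_restrict X)"
    unfolding beta_def[of "subtopology X S"]
    by (rule continuous_map_from_subtopology[OF continuous_map_SC_restrict])
  ultimately show ?thesis unfolding beta_def[of X] continuous_map_in_subtopology by blast
qed

lemma SC_ext_SC_restrict:
  assumes "continuous_map X X h"
  shows "SC_ext X h (SC_restrict X q) = SC_restrict X (SC_ext (subtopology X S) h q)"
proof (rule ext)
  fix f show "SC_ext X h (SC_restrict X q) f = SC_restrict X (SC_ext (subtopology X S) h q) f"
  proof (cases "f \<in> SC_index X")
    case True
    then have "f \<circ> h \<in> SC_index X" "f \<in> SC_index (subtopology X S)"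
      using comp_in_SC_index[OF assms] SC_index_subset_subtopology by auto
    with True show ?thesis by (simp add: SC_ext_def SC_restrict_def)
  qed (simp add: SC_ext_def SC_restrict_def)
qed

lemma extend_by_zero_in_SC_index:
  assumes "closedin X A" "openin X A" "g \<in> SC_index (subtopology X A)"
  shows "(\<lambda>x. if x \<in> A then g x else 0) \<in> SC_index X"
  using assms unfolding SC_index_def by (auto intro!: continuous_map_if_clopen)

text \<open>Both coordinates are continuous and agree on the dense image of \<open>A\<close>.\<close>

lemma beta_point_extend_by_zero:
  assumes "closedin X A" "openin X A"
    and q: "q \<in> topspace (beta (subtopology X A))" and g: "g \<in> SC_index (subtopology X A)"
  shows "q g = q (\<lambda>x. if x \<in> A then g x else 0)"
proof -
  let ?E = "\<lambda>x. if x \<in> A then g x else 0"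
  let ?F = "{q \<in> topspace (SC_cube (subtopology X A)). q g = q ?E}"
  have E: "?E \<in> SC_index (subtopology X A)"
    using extend_by_zero_in_SC_index[OF assms(1,2) g] SC_index_subset_subtopology by blast
  have "closedin (SC_cube (subtopology X A)) ?F"
    unfolding SC_cube_def
    by (rule closedin_continuous_maps_eq[where Y="top_of_set {0..1::real}"])
       (auto intro: Hausdorff_space_subtopology continuous_map_product_projection g E)
  moreover have "SC_embed (subtopology X A) ` topspace (subtopology X A) \<subseteq> ?F"
  proof (rule image_subsetI)
    fix a assume "a \<in> topspace (subtopology X A)"
    then show "SC_embed (subtopology X A) a \<in> ?F"
      using SC_embed_in_SC_cube[of a] g E by (simp add: SC_embed_def)
  qed
  ultimately have "topspace (beta (subtopology X A)) \<subseteq> ?F"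
    unfolding topspace_beta by (rule closure_of_minimal[rotated])
  then show ?thesis using q by blast
qed

lemma inj_on_SC_restrict_beta:
  assumes "closedin X A" "openin X A"
  shows "inj_on (SC_restrict X) (topspace (beta (subtopology X A)))"
proof (rule inj_onI)
  fix q1 q2 assume q1: "q1 \<in> topspace (beta (subtopology X A))"
    and q2: "q2 \<in> topspace (beta (subtopology X A))" and eq: "SC_restrict X q1 = SC_restrict X q2"
  have "topspace (beta (subtopology X A)) \<subseteq> extensional (SC_index (subtopology X A))"
    by (auto simp: topspace_beta SC_cube_def PiE_iff dest!: subsetD[OF closure_of_subset_topspace])
  then have ext: "q1 \<in> extensional (SC_index (subtopology X A))"
    "q2 \<in> extensional (SC_index (subtopology X A))"
    using q1 q2 by blast+
  show "q1 = q2"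
  proof (rule extensionalityI[OF ext])
    fix g assume g: "g \<in> SC_index (subtopology X A)"
    let ?E = "\<lambda>x. if x \<in> A then g x else 0"
    have "q1 ?E = q2 ?E"
      using fun_cong[OF eq, of ?E] extend_by_zero_in_SC_index[OF assms g]
      by (simp add: SC_restrict_def)
    then show "q1 g = q2 g"
      using beta_point_extend_by_zero[OF assms q1 g] beta_point_extend_by_zero[OF assms q2 g] by simp
  qed
qed

section \<open>Compactly supported homeomorphisms\<close>

lemma Homeo_cpt_imp_continuous_map: "h \<in> Homeo_cpt Y \<Longrightarrow> continuous_map Y Y h"
  unfolding Homeo_cpt_def by (auto dest: homeomorphic_imp_continuous_map)

lemma Homeo_cpt_subtopology_fixes: "\<lbrakk>h \<in> Homeo_cpt (subtopology X A); x \<notin> A\<rbrakk> \<Longrightarrow> h x = x"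
  unfolding Homeo_cpt_def by auto

lemma ext_id_eq_self: "(\<And>x. x \<notin> A \<Longrightarrow> f x = x) \<Longrightarrow> ext_id A f = f"
  unfolding ext_id_def by auto

lemma ext_id_Homeo_cpt_subtopology: "h \<in> Homeo_cpt (subtopology X A) \<Longrightarrow> ext_id A h = h"
  by (rule ext_id_eq_self) (rule Homeo_cpt_subtopology_fixes)

lemma image_ext_id_Homeo_cpt_subtopology:
  "ext_id A ` Homeo_cpt (subtopology X A) = Homeo_cpt (subtopology X A)"
proof -
  have "ext_id A ` Homeo_cpt (subtopology X A) = (\<lambda>h. h) ` Homeo_cpt (subtopology X A)"
    by (rule image_cong[OF refl ext_id_Homeo_cpt_subtopology])
  then show ?thesis by simp
qed

lemma Homeo_cpt_subtopology_iff:
  assumes "closedin X A" "openin X A" and fixed: "\<And>x. x \<notin> A \<Longrightarrow> h x = x"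
  shows "h \<in> Homeo_cpt (subtopology X A) \<longleftrightarrow> h \<in> Homeo_cpt X"
proof -
  let ?S = "{y \<in> topspace X. h y \<noteq> y}"
  have A: "topspace (subtopology X A) = A"
    using closedin_subset[OF assms(1)] by (simp add: inf.absorb2)
  have "ext_id A h = h" by (rule ext_id_eq_self[OF fixed])
  then have "homeomorphic_map (subtopology X A) (subtopology X A) h \<longleftrightarrow> homeomorphic_map X X h"
    using homeomorphic_map_ext_id[OF assms(1,2), of h] homeomorphic_map_subtopology_fixing[of X h A] fixed
    by (metis Diff_iff)
  moreover have supp: "{y \<in> A. h y \<noteq> y} = ?S"
    using closedin_subset[OF assms(1)] fixed by auto
  have "?S \<subseteq> A" using fixed by auto
  then have "X closure_of ?S \<subseteq> A" "subtopology X A closure_of ?S = X closure_of ?S"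
    using closure_of_minimal[OF _ assms(1)] closure_of_subtopology_closedin[OF assms(1)] by auto
  then have "compactin (subtopology X A) (subtopology X A closure_of ?S)
      \<longleftrightarrow> compactin X (X closure_of ?S)"
    by (simp add: compactin_subtopology)
  moreover have "\<forall>x. x \<notin> A \<longrightarrow> h x = x" "\<forall>x. x \<notin> topspace X \<longrightarrow> h x = x"
    using fixed closedin_subset[OF assms(1)] by auto
  ultimately show ?thesis unfolding Homeo_cpt_def mem_Collect_eq A supp by blast
qed

lemma Homeo_cpt_subtopology_clopen:
  assumes "closedin X A" "openin X A"
  shows "Homeo_cpt (subtopology X A) = {h \<in> Homeo_cpt X. \<forall>x \<in> topspace X - A. h x = x}"
proof (intro equalityI subsetI)
  fix h assume h: "h \<in> Homeo_cpt (subtopology X A)"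
  then have "h \<in> Homeo_cpt X"
    using Homeo_cpt_subtopology_iff[OF assms Homeo_cpt_subtopology_fixes[OF h]] by blast
  with h show "h \<in> {h \<in> Homeo_cpt X. \<forall>x \<in> topspace X - A. h x = x}"
    using Homeo_cpt_subtopology_fixes[OF h] by blast
next
  fix h assume h: "h \<in> {h \<in> Homeo_cpt X. \<forall>x \<in> topspace X - A. h x = x}"
  then have fixed: "h x = x" if "x \<notin> A" for x
    using that by (cases "x \<in> topspace X") (auto simp: Homeo_cpt_def)
  show "h \<in> Homeo_cpt (subtopology X A)" using Homeo_cpt_subtopology_iff[OF assms fixed] h by blast
qed

definition compact_open_set ::
  "'a topology \<Rightarrow> (('a \<Rightarrow> real) \<Rightarrow> real) set \<Rightarrow> (('a \<Rightarrow> real) \<Rightarrow> real) set \<Rightarrow> ('a \<Rightarrow> 'a) set"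
where
  "compact_open_set Y K U = {h \<in> Homeo_cpt Y. SC_ext Y h ` K \<subseteq> U}"

lemma Homeo_cpt_top_eq:
  "Homeo_cpt_top Y = topology_generated_by
     {compact_open_set Y K U | K U. compactin (beta Y) K \<and> openin (beta Y) U}"
  by (simp add: Homeo_cpt_top_def compact_open_set_def)

lemma Union_compact_open_sets:
  "\<Union> {compact_open_set Y K U | K U. compactin (beta Y) K \<and> openin (beta Y) U} = Homeo_cpt Y"
proof -
  have "compact_open_set Y {} {} = Homeo_cpt Y" by (simp add: compact_open_set_def)
  then show ?thesis by (auto simp: compact_open_set_def)
qed

lemma topspace_Homeo_cpt_top: "topspace (Homeo_cpt_top Y) = Homeo_cpt Y"
  by (simp add: Homeo_cpt_top_eq Union_compact_open_sets)

lemma openin_compact_open_set: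
  "\<lbrakk>compactin (beta Y) K; openin (beta Y) U\<rbrakk> \<Longrightarrow> openin (Homeo_cpt_top Y) (compact_open_set Y K U)"
  unfolding Homeo_cpt_top_eq by (rule topology_generated_by_Basis) blast

lemma closedin_Homeo_cpt_fixing:
  assumes "Tychonoff_sp Y" and "S \<subseteq> topspace Y"
  shows "closedin (Homeo_cpt_top Y) {h \<in> Homeo_cpt Y. \<forall>x \<in> S. h x = x}"
proof -
  have inj: "inj_on (SC_embed Y) (topspace Y)"
    using assms(1) inj_on_SC_embed Hausdorff_imp_t1_space unfolding Tychonoff_sp_def by blast
  have moved: "{h \<in> Homeo_cpt Y. h x \<noteq> x}
      = compact_open_set Y {SC_embed Y x} (topspace (beta Y) - {SC_embed Y x})"
    if x: "x \<in> topspace Y" for x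
  proof -
    have iff: "SC_ext Y h (SC_embed Y x) \<in> topspace (beta Y) - {SC_embed Y x} \<longleftrightarrow> h x \<noteq> x"
      if "h \<in> Homeo_cpt Y" for h
    proof -
      have h: "continuous_map Y Y h" by (rule Homeo_cpt_imp_continuous_map[OF that])
      then have hx: "h x \<in> topspace Y"
        using x continuous_map_image_subset_topspace by blast
      then have "SC_embed Y (h x) = SC_embed Y x \<longleftrightarrow> h x = x"
        using inj_on_eq_iff[OF inj hx x] by blast
      then show ?thesis
        using SC_ext_SC_embed[OF h x] SC_embed_in_beta[OF hx] by auto
    qed
    then show ?thesis unfolding compact_open_set_def by auto
  qed
  have "openin (Homeo_cpt_top Y) {h \<in> Homeo_cpt Y. h x \<noteq> x}" if "x \<in> S" for x
  proof -
    have x: "x \<in> topspace Y" using that assms(2) by blast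
    then have e: "SC_embed Y x \<in> topspace (beta Y)" by (rule SC_embed_in_beta)
    then have "closedin (beta Y) {SC_embed Y x}"
      by (rule closedin_t1_singleton[OF Hausdorff_imp_t1_space[OF Hausdorff_space_beta]])
    then have "openin (beta Y) (topspace (beta Y) - {SC_embed Y x})" by blast
    moreover have "compactin (beta Y) {SC_embed Y x}" using e by simp
    ultimately show ?thesis unfolding moved[OF x] by (rule openin_compact_open_set[rotated])
  qed
  then have "openin (Homeo_cpt_top Y) (\<Union>x\<in>S. {h \<in> Homeo_cpt Y. h x \<noteq> x})"
    by (intro openin_Union) blast
  moreover have "(\<Union>x\<in>S. {h \<in> Homeo_cpt Y. h x \<noteq> x})
      = topspace (Homeo_cpt_top Y) - {h \<in> Homeo_cpt Y. \<forall>x \<in> S. h x = x}"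
    unfolding topspace_Homeo_cpt_top by auto
  ultimately show ?thesis unfolding closedin_def topspace_Homeo_cpt_top by auto
qed

context
  fixes X :: "'a topology" and A :: "'a set"
  assumes clo: "closedin X A" and ope: "openin X A"
begin

lemma topspace_beta_clopen_split:
  "topspace (beta X) = SC_restrict X ` topspace (beta (subtopology X A))
     \<union> SC_cube X closure_of (SC_embed X ` (topspace X - A))"
  unfolding SC_restrict_image_beta topspace_beta[of X] closure_of_Un[symmetric] image_Un[symmetric]
  by (simp add: Int_Diff_Un)

text \<open>A homeomorphism supported in \<open>A\<close> acts on \<open>\<beta>X\<close> through \<open>\<beta>A\<close> and fixes the rest.\<close>

lemma SC_ext_image_subset_iff:
  assumes h: "h \<in> Homeo_cpt (subtopology X A)" and K: "K \<subseteq> topspace (beta X)"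
  shows "SC_ext X h ` K \<subseteq> V \<longleftrightarrow>
    K \<inter> SC_cube X closure_of (SC_embed X ` (topspace X - A)) \<subseteq> V \<and>
    SC_ext (subtopology X A) h ` {q \<in> topspace (beta (subtopology X A)). SC_restrict X q \<in> K}
      \<subseteq> {q \<in> topspace (beta (subtopology X A)). SC_restrict X q \<in> V}"
    (is "_ \<longleftrightarrow> K \<inter> ?C \<subseteq> V \<and> ?R")
proof -
  have hX: "h \<in> Homeo_cpt X" using h Homeo_cpt_subtopology_clopen[OF clo ope] by blast
  have hc: "continuous_map X X h" by (rule Homeo_cpt_imp_continuous_map[OF hX])
  have hA: "continuous_map (subtopology X A) (subtopology X A) h"
    by (rule Homeo_cpt_imp_continuous_map[OF h])
  have fixC: "SC_ext X h p = p" if "p \<in> ?C" for p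
    using h Homeo_cpt_subtopology_clopen[OF clo ope]
    by (intro SC_ext_fixes_closure_of[OF hc _ _ that]) auto
  have ext_restrict: "SC_ext X h (SC_restrict X q) \<in> V \<longleftrightarrow>
      SC_ext (subtopology X A) h q \<in> {q \<in> topspace (beta (subtopology X A)). SC_restrict X q \<in> V}"
    if "q \<in> topspace (beta (subtopology X A))" for q
    using that SC_ext_image_beta[OF hA] SC_ext_SC_restrict[OF hc] by auto
  show ?thesis
  proof
    assume L: "SC_ext X h ` K \<subseteq> V"
    show "K \<inter> ?C \<subseteq> V \<and> ?R"
      using L fixC ext_restrict by (fastforce simp: image_subset_iff)
  next
    assume R: "K \<inter> ?C \<subseteq> V \<and> ?R"
    have "SC_ext X h p \<in> V" if p: "p \<in> K" for p
    proof (cases "p \<in> ?C")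
      case True
      then show ?thesis using fixC R p by auto
    next
      case False
      then obtain q where "q \<in> topspace (beta (subtopology X A))" "p = SC_restrict X q"
        using p K topspace_beta_clopen_split by blast
      then show ?thesis using R p ext_restrict by blast
    qed
    then show "SC_ext X h ` K \<subseteq> V" by blast
  qed
qed

lemma openin_Homeo_cpt_top_subtopology_trace:
  assumes K: "compactin (beta X) K" and V: "openin (beta X) V"
  shows "openin (Homeo_cpt_top (subtopology X A)) (compact_open_set X K V \<inter> Homeo_cpt (subtopology X A))"
proof -
  let ?C = "SC_cube X closure_of (SC_embed X ` (topspace X - A))"
  let ?K' = "{q \<in> topspace (beta (subtopology X A)). SC_restrict X q \<in> K}"
  let ?V' = "{q \<in> topspace (beta (subtopology X A)). SC_restrict X q \<in> V}"
  have hmem: "h \<in> compact_open_set X K V \<longleftrightarrow>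
      K \<inter> ?C \<subseteq> V \<and> h \<in> compact_open_set (subtopology X A) ?K' ?V'"
    if h: "h \<in> Homeo_cpt (subtopology X A)" for h
  proof -
    have "h \<in> Homeo_cpt X" using h Homeo_cpt_subtopology_clopen[OF clo ope] by blast
    then show ?thesis
      using SC_ext_image_subset_iff[OF h compactin_subset_topspace[OF K], of V] h
      unfolding compact_open_set_def by blast
  qed
  have "closedin (beta X) K" by (rule compactin_imp_closedin[OF Hausdorff_space_beta K])
  then have "closedin (beta (subtopology X A)) ?K'"
    by (rule closedin_continuous_map_preimage[OF continuous_map_SC_restrict_beta])
  then have "compactin (beta (subtopology X A)) ?K'"
    by (rule closedin_compact_space[OF compact_space_beta])
  moreover have "openin (beta (subtopology X A)) ?V'"
    by (rule openin_continuous_map_preimage[OF continuous_map_SC_restrict_beta V])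
  ultimately have open': "openin (Homeo_cpt_top (subtopology X A)) (compact_open_set (subtopology X A) ?K' ?V')"
    by (rule openin_compact_open_set)
  show ?thesis
  proof (cases "K \<inter> ?C \<subseteq> V")
    case True
    have "compact_open_set X K V \<inter> Homeo_cpt (subtopology X A)
        = compact_open_set (subtopology X A) ?K' ?V'"
      using hmem True unfolding compact_open_set_def by blast
    with open' show ?thesis by simp
  next
    case False
    then have "compact_open_set X K V \<inter> Homeo_cpt (subtopology X A) = {}" using hmem by blast
    then show ?thesis by simp
  qed
qed

lemma compact_open_set_subtopology:
  assumes K: "K \<subseteq> topspace (beta (subtopology X A))" and V: "V \<subseteq> topspace (beta (subtopology X A))"
  shows "compact_open_set (subtopology X A) K V
    = compact_open_set X (SC_restrict X ` K)
        (topspace (beta X) - SC_restrict X ` (topspace (beta (subtopology X A)) - V))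
      \<inter> Homeo_cpt (subtopology X A)"
proof -
  define W where "W = topspace (beta X) - SC_restrict X ` (topspace (beta (subtopology X A)) - V)"
  have mem: "SC_restrict X r \<in> W \<longleftrightarrow> r \<in> V" if r: "r \<in> topspace (beta (subtopology X A))" for r
  proof -
    have "SC_restrict X r \<in> topspace (beta X)"
      using continuous_map_image_subset_topspace[OF continuous_map_SC_restrict_beta[of X A]] r by blast
    moreover have "SC_restrict X r \<in> SC_restrict X ` (topspace (beta (subtopology X A)) - V)
        \<longleftrightarrow> r \<in> topspace (beta (subtopology X A)) - V"
      by (rule inj_on_image_mem_iff[OF inj_on_SC_restrict_beta[OF clo ope] r Diff_subset])
    ultimately show ?thesis using r unfolding W_def by blast
  qed
  have "h \<in> compact_open_set (subtopology X A) K V \<longleftrightarrow> h \<in> compact_open_set X (SC_restrict X ` K) W"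
    if h: "h \<in> Homeo_cpt (subtopology X A)" for h
  proof -
    have hX: "h \<in> Homeo_cpt X" using h Homeo_cpt_subtopology_clopen[OF clo ope] by blast
    have "SC_ext X h (SC_restrict X q) \<in> W \<longleftrightarrow> SC_ext (subtopology X A) h q \<in> V" if "q \<in> K" for q
    proof -
      have "SC_ext (subtopology X A) h q \<in> topspace (beta (subtopology X A))"
        using that K SC_ext_image_beta[OF Homeo_cpt_imp_continuous_map[OF h]] by blast
      then show ?thesis
        using mem SC_ext_SC_restrict[OF Homeo_cpt_imp_continuous_map[OF hX], where S=A] by simp
    qed
    then show ?thesis unfolding compact_open_set_def using h hX by (auto simp: image_subset_iff)
  qed
  then show ?thesis unfolding W_def[symmetric] compact_open_set_def by blast
qed

lemma subtopology_Homeo_cpt_top: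
  "subtopology (Homeo_cpt_top X) (Homeo_cpt (subtopology X A)) = Homeo_cpt_top (subtopology X A)"
  unfolding Homeo_cpt_top_eq[of X] Homeo_cpt_top_eq[of "subtopology X A"]
proof (rule subtopology_topology_generated_by_eq)
  show "Homeo_cpt (subtopology X A)
      \<subseteq> \<Union> {compact_open_set X K U |K U. compactin (beta X) K \<and> openin (beta X) U}"
    unfolding Union_compact_open_sets using Homeo_cpt_subtopology_clopen[OF clo ope] by blast
  show "\<Union> {compact_open_set (subtopology X A) K U |K U.
      compactin (beta (subtopology X A)) K \<and> openin (beta (subtopology X A)) U}
    = Homeo_cpt (subtopology X A)"
    by (rule Union_compact_open_sets)
next
  fix U assume "U \<in> {compact_open_set X K U |K U. compactin (beta X) K \<and> openin (beta X) U}"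
  then show "openin (topology_generated_by {compact_open_set (subtopology X A) K U |K U.
      compactin (beta (subtopology X A)) K \<and> openin (beta (subtopology X A)) U})
    (U \<inter> Homeo_cpt (subtopology X A))"
    using openin_Homeo_cpt_top_subtopology_trace unfolding Homeo_cpt_top_eq by blast
next
  fix V assume "V \<in> {compact_open_set (subtopology X A) K U |K U.
      compactin (beta (subtopology X A)) K \<and> openin (beta (subtopology X A)) U}"
  then obtain K U where V: "V = compact_open_set (subtopology X A) K U"
    and K: "compactin (beta (subtopology X A)) K" and U: "openin (beta (subtopology X A)) U"
    by blast
  let ?\<sigma> = "SC_restrict X"
  have "compactin (beta X) (?\<sigma> ` K)"
    by (rule image_compactin[OF K continuous_map_SC_restrict_beta])
  moreover have "compactin (beta X) (?\<sigma> ` (topspace (beta (subtopology X A)) - U))"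
    using U by (intro image_compactin[OF _ continuous_map_SC_restrict_beta]
        closedin_compact_space[OF compact_space_beta]) blast
  then have "openin (beta X) (topspace (beta X) - ?\<sigma> ` (topspace (beta (subtopology X A)) - U))"
    by (intro openin_diff openin_topspace compactin_imp_closedin Hausdorff_space_beta)
  ultimately show "openin (subtopology (topology_generated_by
      {compact_open_set X K U |K U. compactin (beta X) K \<and> openin (beta X) U})
      (Homeo_cpt (subtopology X A))) V"
    unfolding V compact_open_set_subtopology[OF compactin_subset_topspace[OF K] openin_subset[OF U]]
    by (intro openin_subtopology_Int topology_generated_by_Basis) blast
qed

lemma embedding_map_ext_id:
  "embedding_map (Homeo_cpt_top (subtopology X A)) (Homeo_cpt_top X) (ext_id A)"
proof -
  have "homeomorphic_map (Homeo_cpt_top (subtopology X A))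
      (subtopology (Homeo_cpt_top X) (Homeo_cpt (subtopology X A))) id"
    by (simp add: subtopology_Homeo_cpt_top)
  then have "homeomorphic_map (Homeo_cpt_top (subtopology X A))
      (subtopology (Homeo_cpt_top X) (Homeo_cpt (subtopology X A))) (ext_id A)"
    by (rule homeomorphic_map_eq) (simp add: topspace_Homeo_cpt_top ext_id_Homeo_cpt_subtopology)
  then show ?thesis
    unfolding embedding_map_def topspace_Homeo_cpt_top image_ext_id_Homeo_cpt_subtopology .
qed

lemma closedin_Homeo_cpt_subtopology:
  "Tychonoff_sp X \<Longrightarrow> closedin (Homeo_cpt_top X) (Homeo_cpt (subtopology X A))"
  unfolding Homeo_cpt_subtopology_clopen[OF clo ope]
  by (rule closedin_Homeo_cpt_fixing) auto

lemma Homeo_K_subtopology: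
  "Homeo_K (subtopology X A) (K \<inter> A) = Homeo_cpt (subtopology X A) \<inter> Homeo_K X K"
  unfolding Homeo_K_def using Homeo_cpt_subtopology_clopen[OF clo ope] closedin_subset[OF clo]
  by auto

lemma CSHP_subtopology:
  assumes "Tychonoff_sp X" and "CSHP X"
  shows "CSHP (subtopology X A)"
  unfolding CSHP_def
proof (intro allI impI iffI)
  fix V K assume "openin (Homeo_cpt_top (subtopology X A)) V"
  then show "openin (subtopology (Homeo_cpt_top (subtopology X A)) (Homeo_K (subtopology X A) K))
      (V \<inter> Homeo_K (subtopology X A) K)"
    by (rule openin_subtopology_Int)
next
  fix V assume V: "V \<subseteq> Homeo_cpt (subtopology X A)"
    and traces: "\<forall>K. compactin (subtopology X A) K \<longrightarrow>
      openin (subtopology (Homeo_cpt_top (subtopology X A)) (Homeo_K (subtopology X A) K))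
        (V \<inter> Homeo_K (subtopology X A) K)"
  let ?T = "Homeo_cpt_top X" and ?C = "Homeo_cpt (subtopology X A)"
  let ?W = "V \<union> (topspace ?T - ?C)"
  have C: "closedin ?T ?C" by (rule closedin_Homeo_cpt_subtopology[OF assms(1)])
  have "openin (subtopology ?T (Homeo_K X K)) (?W \<inter> Homeo_K X K)" if K: "compactin X K" for K
  proof (rule openin_subtopology_Un_complement[OF C V])
    show "Homeo_K X K \<subseteq> topspace ?T" by (auto simp: Homeo_K_def topspace_Homeo_cpt_top)
    have "compactin (subtopology X A) (K \<inter> A)"
      using compact_Int_closedin[OF K clo] by (simp add: compactin_subtopology)
    then have "openin (subtopology (Homeo_cpt_top (subtopology X A)) (Homeo_K (subtopology X A) (K \<inter> A)))
        (V \<inter> Homeo_K (subtopology X A) (K \<inter> A))"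
      using traces by blast
    moreover have "V \<inter> (?C \<inter> Homeo_K X K) = V \<inter> Homeo_K X K" using V by blast
    ultimately show "openin (subtopology ?T (?C \<inter> Homeo_K X K)) (V \<inter> Homeo_K X K)"
      unfolding Homeo_K_subtopology subtopology_Homeo_cpt_top[symmetric]
        subtopology_subtopology by simp
  qed
  moreover have "?W \<subseteq> Homeo_cpt X"
    using V closedin_subset[OF C] unfolding topspace_Homeo_cpt_top by blast
  ultimately have "openin ?T ?W"
    using assms(2) unfolding CSHP_def by blast
  then have "openin (subtopology ?T ?C) (?W \<inter> ?C)" by (rule openin_subtopology_Int)
  moreover have "?W \<inter> ?C = V" using V by blast
  ultimately show "openin (Homeo_cpt_top (subtopology X A)) V"
    by (simp add: subtopology_Homeo_cpt_top)
qed

end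

theorem lemma5p3:
  fixes X :: "'a topology" and A :: "'a set"
  assumes "Tychonoff_sp X" and "closedin X A" and "openin X A"
  shows "embedding_map (Homeo_cpt_top (subtopology X A)) (Homeo_cpt_top X) (ext_id A)
    \<and> closedin (Homeo_cpt_top X) (ext_id A ` Homeo_cpt (subtopology X A))
    \<and> ext_id A id = id
    \<and> (\<forall>g \<in> Homeo_cpt (subtopology X A). \<forall>h \<in> Homeo_cpt (subtopology X A).
          ext_id A (g \<circ> h) = ext_id A g \<circ> ext_id A h)
    \<and> (CSHP X \<longrightarrow> CSHP (subtopology X A))"
proof (intro conjI ballI impI)
  show "embedding_map (Homeo_cpt_top (subtopology X A)) (Homeo_cpt_top X) (ext_id A)"
    by (rule embedding_map_ext_id[OF assms(2,3)])
  show "closedin (Homeo_cpt_top X) (ext_id A ` Homeo_cpt (subtopology X A))"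
    unfolding image_ext_id_Homeo_cpt_subtopology
    by (rule closedin_Homeo_cpt_subtopology[OF assms(2,3,1)])
  show "ext_id A id = id" by (rule ext_id_eq_self) simp
  fix g h assume g: "g \<in> Homeo_cpt (subtopology X A)" and h: "h \<in> Homeo_cpt (subtopology X A)"
  have "ext_id A (g \<circ> h) = g \<circ> h"
    by (rule ext_id_eq_self) (simp add: Homeo_cpt_subtopology_fixes[OF g] Homeo_cpt_subtopology_fixes[OF h])
  then show "ext_id A (g \<circ> h) = ext_id A g \<circ> ext_id A h"
    by (simp add: ext_id_Homeo_cpt_subtopology[OF g] ext_id_Homeo_cpt_subtopology[OF h])
next
  show "CSHP X \<Longrightarrow> CSHP (subtopology X A)" by (rule CSHP_subtopology[OF assms(2,3,1)])
qed

end
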